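(* Let $\bm X=[\bm x_1,\dots,\bm x_p]\in\mathbb{R}^{n\times p}$ have full column rank and unit-norm columns. Fix $j\in[p]$, let $\bm X_{\backslash j}$ be $\bm X$ with column $j$ removed, let $\bm X_{\backslash j}=\bm U_{\backslash j}\bm D_{\backslash j}\bm V_{\backslash j}^\top$ be a (thin) singular value decomposition with $\bm U_{\backslash j}\in\mathbb{R}^{n\times(p-1)}$ having orthonormal columns, and let $\sigma_j^2=\|\bm x_j-\bm U_{\backslash j}\bm U_{\backslash j}^\top\bm x_j\|^2$ (so $\sigma_j>0$). For $s_j\in\mathbb{R}$, a vector $\widetilde{\bm x}_j\in\mathbb{R}^n$ satisfies (i) $\bm X_{\backslash j}^\top\widetilde{\bm x}_j=\bm X_{\backslash j}^\top\bm x_j$, (ii) $\bm x_j^\top\widetilde{\bm x}_j=1-s_j$, (iii) $\widetilde{\bm x}_j^\top\widetilde{\bm x}_j=1$ if and only if $s_j\in[0,2\sigma_j^2]$ and $$\widetilde{\bm x}_j=\frac{s_j}{\sigma_j^2}\bm U_{\backslash j}\bm U_{\backslash j}^\top\bm x_j+\Big(1-\frac{s_j}{\sigma_j^2}\Big)\bm x_j+\bm r_j$$ for some vector $\bm r_j\in\mathbb{R}^n$ with $\bm X^\top\bm r_j=\bm 0$ and $\|\bm r_j\|=(2s_j-s_j^2/\sigma_j^2)^{1/2}$. *)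

theory Defs
  imports "HOL-Analysis.Analysis"
begin

text \<open>Matrices X in R^(n x p) are represented by their columns x :: nat => real^'n,
  column k (k < p) being x k (0-indexed). The column index of X with column j removed:
  column m of X_{\j} is column (del_idx j m) of X.\<close>

definition del_idx :: "nat \<Rightarrow> nat \<Rightarrow> nat" where
  "del_idx j m = (if m < j then m else Suc m)"

definition UUt :: "(nat \<Rightarrow> real ^ 'n) \<Rightarrow> nat \<Rightarrow> real ^ 'n \<Rightarrow> real ^ 'n" where
  "UUt u m y = (\<Sum>l<m. (u l \<bullet> y) *\<^sub>R u l)"

definition full_col_rank :: "(nat \<Rightarrow> real ^ 'n) \<Rightarrow> nat \<Rightarrow> bool" where
  "full_col_rank x p = (\<forall>c::nat \<Rightarrow> real. (\<Sum>k<p. c k *\<^sub>R x k) = 0 \<longrightarrow> (\<forall>k<p. c k = 0))"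

text \<open>Thin SVD X_{\j} = U D V^T: U is n x (p-1) with orthonormal columns u,
  D = diag(d) with d >= 0, V is (p-1) x (p-1) orthogonal with entries v a b.\<close>
definition thin_svd_del :: "(nat \<Rightarrow> real ^ 'n) \<Rightarrow> nat \<Rightarrow> nat \<Rightarrow>
    (nat \<Rightarrow> real ^ 'n) \<Rightarrow> (nat \<Rightarrow> real) \<Rightarrow> (nat \<Rightarrow> nat \<Rightarrow> real) \<Rightarrow> bool" where
  "thin_svd_del x p j u d v =
     ((\<forall>l<p-1. \<forall>l'<p-1. u l \<bullet> u l' = (if l = l' then 1 else 0)) \<and>
      (\<forall>l<p-1. d l \<ge> 0) \<and>
      (\<forall>l<p-1. \<forall>l'<p-1. (\<Sum>m<p-1. v m l * v m l') = (if l = l' then 1 else 0)) \<and>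
      (\<forall>m<p-1. x (del_idx j m) = (\<Sum>l<p-1. (d l * v m l) *\<^sub>R u l)))"

end

theory Submission
  imports Defs
begin

text \<open>Let \<open>w = x\<^sub>j - U U\<^sup>T x\<^sub>j\<close> be the residual of \<open>x\<^sub>j\<close> against the span of the other columns,
  which is the range of \<open>U\<close>; then \<open>x\<^sub>j \<bullet> w = \<sigma>\<^sup>2\<close>. The linear constraints (i), (ii) say exactly that
  \<open>r = xt - c\<close> is orthogonal to every column, where \<open>c = x\<^sub>j - (s/\<sigma>\<^sup>2) w\<close> is the combination
  in the statement. By Pythagoras \<open>\<parallel>xt\<parallel>\<^sup>2 = \<parallel>c\<parallel>\<^sup>2 + \<parallel>r\<parallel>\<^sup>2 = 1 - 2s + s\<^sup>2/\<sigma>\<^sup>2 + \<parallel>r\<parallel>\<^sup>2\<close>,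
  so (iii) fixes \<open>\<parallel>r\<parallel>\<close>, and the required value \<open>2s - s\<^sup>2/\<sigma>\<^sup>2\<close> is nonnegative iff \<open>0 \<le> s \<le> 2\<sigma>\<^sup>2\<close>.\<close>

lemma inner_span_orthogonal:
  fixes w z :: "'a::real_inner"
  assumes "\<forall>b\<in>B. b \<bullet> w = 0" and "z \<in> span B"
  shows "z \<bullet> w = 0"
  using orthogonal_to_span[OF assms(2), of w] assms(1)
  by (auto simp: orthogonal_def inner_commute)

lemma norm_eq_sqrt_iff: "norm r = sqrt q \<longleftrightarrow> (norm r)\<^sup>2 = q"
  by (metis abs_norm_cancel norm_ge_zero real_sqrt_abs real_sqrt_ge_0_iff real_sqrt_pow2)

lemma two_mult_minus_square_div_nonneg_iff:
  fixes s \<sigma>2 :: real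
  assumes "\<sigma>2 > 0"
  shows "0 \<le> 2 * s - s\<^sup>2 / \<sigma>2 \<longleftrightarrow> 0 \<le> s \<and> s \<le> 2 * \<sigma>2"
proof -
  have "2 * s - s\<^sup>2 / \<sigma>2 = s * (2 * \<sigma>2 - s) / \<sigma>2"
    using assms by (simp add: field_simps power2_eq_square)
  also have "0 \<le> \<dots> \<longleftrightarrow> 0 \<le> s * (2 * \<sigma>2 - s)"
    using assms by (simp add: zero_le_divide_iff)
  also have "\<dots> \<longleftrightarrow> 0 \<le> s \<and> s \<le> 2 * \<sigma>2"
    using assms by (auto simp: zero_le_mult_iff)
  finally show ?thesis .
qed

lemma inner_residual_eq_norm_sq:
  fixes y P :: "'a::real_inner"
  assumes "P \<in> span B" and "\<forall>b\<in>B. b \<bullet> (y - P) = 0"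
  shows "y \<bullet> (y - P) = (norm (y - P))\<^sup>2"
proof -
  have "P \<bullet> (y - P) = 0" using inner_span_orthogonal[OF assms(2,1)] .
  then have "y \<bullet> (y - P) = (y - P) \<bullet> (y - P)" by (simp add: inner_diff_left)
  then show ?thesis by (simp add: power2_norm_eq_inner)
qed

lemma affine_combination_eq_diff:
  fixes y P :: "'a::real_vector"
  shows "a *\<^sub>R P + (1 - a) *\<^sub>R y = y - a *\<^sub>R (y - P)"
  by (simp add: algebra_simps)

lemma linear_constraints_iff_orthogonal:
  fixes y P xt :: "'a::real_inner"
  assumes "norm y = 1" and "P \<in> span B" and "\<forall>b\<in>B. b \<bullet> (y - P) = 0"
    and "y \<noteq> P"
  defines "\<sigma>2 \<equiv> (norm (y - P))\<^sup>2"
  shows "((\<forall>b\<in>B. b \<bullet> xt = b \<bullet> y) \<and> y \<bullet> xt = 1 - s) \<longleftrightarrow>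
    (\<forall>b\<in>insert y B. b \<bullet> (xt - ((s / \<sigma>2) *\<^sub>R P + (1 - s / \<sigma>2) *\<^sub>R y)) = 0)"
proof -
  have "y \<bullet> y = 1" using assms(1) by (simp add: norm_eq_sqrt_inner)
  moreover have "y \<bullet> (y - P) = \<sigma>2" using inner_residual_eq_norm_sq[OF assms(2,3)] by (simp add: \<sigma>2_def)
  ultimately have "y \<bullet> (y - (s / \<sigma>2) *\<^sub>R (y - P)) = 1 - s"
    using assms(4) by (simp add: \<sigma>2_def inner_diff_right)
  moreover have "b \<bullet> (y - (s / \<sigma>2) *\<^sub>R (y - P)) = b \<bullet> y" if "b \<in> B" for b
  proof -
    have "b \<bullet> (y - P) = 0" using assms(3) that by blast
    then show ?thesis by (simp only: inner_diff_right[of b y] inner_scaleR_right)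
  qed
  ultimately show ?thesis
    by (auto simp: affine_combination_eq_diff inner_diff_right)
qed

lemma norm_sq_affine_combination_add_orthogonal:
  fixes y P r :: "'a::real_inner" and s :: real
  assumes "norm y = 1" and "P \<in> span B" and "\<forall>b\<in>B. b \<bullet> (y - P) = 0"
    and "y \<noteq> P"
    and "\<forall>b\<in>insert y B. b \<bullet> r = 0"
  defines "\<sigma>2 \<equiv> (norm (y - P))\<^sup>2"
  shows "(norm ((s / \<sigma>2) *\<^sub>R P + (1 - s / \<sigma>2) *\<^sub>R y + r))\<^sup>2
    = 1 - 2 * s + s\<^sup>2 / \<sigma>2 + (norm r)\<^sup>2"
proof -
  define w where "w = y - P"
  define c where "c = y - (s / \<sigma>2) *\<^sub>R w"
  have "w \<in> span (insert y B)"
    using assms(2) unfolding w_def by (meson span_base span_diff span_mono subset_insertI insertI1 subsetD)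
  then have "w \<bullet> r = 0" using inner_span_orthogonal assms(5) by blast
  moreover have "y \<bullet> r = 0" using assms(5) by simp
  ultimately have cr: "c \<bullet> r = 0" by (simp add: c_def inner_diff_left)
  have "y \<bullet> y = 1" using assms(1) by (simp add: norm_eq_sqrt_inner)
  moreover have "y \<bullet> w = \<sigma>2" using inner_residual_eq_norm_sq[OF assms(2,3)] by (simp add: \<sigma>2_def w_def)
  moreover have "w \<bullet> w = \<sigma>2" by (simp add: \<sigma>2_def w_def power2_norm_eq_inner)
  ultimately have "c \<bullet> c = 1 - 2 * s + s\<^sup>2 / \<sigma>2"
    using assms(4) by (simp add: c_def \<sigma>2_def inner_diff_left inner_diff_right inner_commute
        power2_eq_square)
  with cr show ?thesis
    by (simp add: affine_combination_eq_diff c_def w_def power2_norm_eq_inner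
        inner_add_left inner_add_right inner_commute)
qed

lemma unit_vector_constraints_iff:
  fixes y P xt :: "'a::real_inner" and s :: real
  assumes unit: "norm y = 1" and P: "P \<in> span B" and residual: "\<forall>b\<in>B. b \<bullet> (y - P) = 0"
    and y_notin: "y \<notin> span B"
  defines "\<sigma>2 \<equiv> (norm (y - P))\<^sup>2"
  shows "((\<forall>b\<in>B. b \<bullet> xt = b \<bullet> y) \<and> y \<bullet> xt = 1 - s \<and> xt \<bullet> xt = 1) \<longleftrightarrow>
    (0 \<le> s \<and> s \<le> 2 * \<sigma>2 \<and>
      (\<exists>r. xt = (s / \<sigma>2) *\<^sub>R P + (1 - s / \<sigma>2) *\<^sub>R y + r
        \<and> (\<forall>b\<in>insert y B. b \<bullet> r = 0) \<and> norm r = sqrt (2 * s - s\<^sup>2 / \<sigma>2)))"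
proof -
  define c where "c = (s / \<sigma>2) *\<^sub>R P + (1 - s / \<sigma>2) *\<^sub>R y"
  have y_ne_P: "y \<noteq> P" using P y_notin by blast
  then have \<sigma>2_pos: "\<sigma>2 > 0" by (simp add: \<sigma>2_def)
  have linear: "((\<forall>b\<in>B. b \<bullet> xt = b \<bullet> y) \<and> y \<bullet> xt = 1 - s) \<longleftrightarrow>
      (\<forall>b\<in>insert y B. b \<bullet> (xt - c) = 0)"
    using linear_constraints_iff_orthogonal[OF unit P residual y_ne_P] by (simp add: c_def \<sigma>2_def)
  have unit_iff: "(norm (c + r))\<^sup>2 = 1 \<longleftrightarrow> norm r = sqrt (2 * s - s\<^sup>2 / \<sigma>2)"
    if "\<forall>b\<in>insert y B. b \<bullet> r = 0" for r
  proof -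
    have "(norm (c + r))\<^sup>2 = 1 - 2 * s + s\<^sup>2 / \<sigma>2 + (norm r)\<^sup>2"
      using norm_sq_affine_combination_add_orthogonal[OF unit P residual y_ne_P that] by (simp add: c_def \<sigma>2_def)
    then show ?thesis unfolding norm_eq_sqrt_iff by linarith
  qed
  have "((\<forall>b\<in>B. b \<bullet> xt = b \<bullet> y) \<and> y \<bullet> xt = 1 - s \<and> xt \<bullet> xt = 1) \<longleftrightarrow>
      (\<exists>r. xt = c + r \<and> (\<forall>b\<in>insert y B. b \<bullet> r = 0) \<and> norm r = sqrt (2 * s - s\<^sup>2 / \<sigma>2))"
  proof
    assume lhs: "(\<forall>b\<in>B. b \<bullet> xt = b \<bullet> y) \<and> y \<bullet> xt = 1 - s \<and> xt \<bullet> xt = 1"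
    then have "\<forall>b\<in>insert y B. b \<bullet> (xt - c) = 0" using linear by blast
    moreover have "(norm (c + (xt - c)))\<^sup>2 = 1" using lhs by (simp add: power2_norm_eq_inner)
    ultimately show "\<exists>r. xt = c + r \<and> (\<forall>b\<in>insert y B. b \<bullet> r = 0)
        \<and> norm r = sqrt (2 * s - s\<^sup>2 / \<sigma>2)"
      using unit_iff[of "xt - c"] by (intro exI[of _ "xt - c"]) simp
  next
    assume "\<exists>r. xt = c + r \<and> (\<forall>b\<in>insert y B. b \<bullet> r = 0)
        \<and> norm r = sqrt (2 * s - s\<^sup>2 / \<sigma>2)"
    then obtain r where "xt = c + r" "\<forall>b\<in>insert y B. b \<bullet> r = 0"
      "norm r = sqrt (2 * s - s\<^sup>2 / \<sigma>2)" by blast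
    then show "(\<forall>b\<in>B. b \<bullet> xt = b \<bullet> y) \<and> y \<bullet> xt = 1 - s \<and> xt \<bullet> xt = 1"
      using linear unit_iff[of r] by (simp add: power2_norm_eq_inner)
  qed
  also have "\<dots> \<longleftrightarrow> 0 \<le> s \<and> s \<le> 2 * \<sigma>2 \<and>
      (\<exists>r. xt = c + r \<and> (\<forall>b\<in>insert y B. b \<bullet> r = 0) \<and> norm r = sqrt (2 * s - s\<^sup>2 / \<sigma>2))"
    using two_mult_minus_square_div_nonneg_iff[OF \<sigma>2_pos, of s] by (metis norm_ge_zero real_sqrt_ge_0_iff)
  finally show ?thesis by (simp add: c_def)
qed

lemma full_col_rank_inj_on:
  assumes "full_col_rank x p"
  shows "inj_on x {..<p}"
proof (rule inj_onI, rule ccontr)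
  fix a b assume ab: "a \<in> {..<p}" "b \<in> {..<p}" "x a = x b" "a \<noteq> b"
  define c where "c k = (if k = a then 1 else if k = b then -1 else (0::real))" for k
  have "(\<Sum>k<p. c k *\<^sub>R x k) = (\<Sum>k\<in>{a,b}. c k *\<^sub>R x k)"
    by (rule sum.mono_neutral_right) (use ab in \<open>auto simp: c_def\<close>)
  also have "\<dots> = 0" using ab by (simp add: c_def)
  finally have "\<forall>k<p. c k = 0" using assms unfolding full_col_rank_def by blast
  then show False using ab by (auto simp: c_def)
qed

lemma full_col_rank_independent:
  assumes "full_col_rank x p"
  shows "independent (x ` {..<p})"
proof
  assume "dependent (x ` {..<p})"
  then obtain c where c: "\<exists>v\<in>x ` {..<p}. c v \<noteq> 0" "(\<Sum>v\<in>x ` {..<p}. c v *\<^sub>R v) = 0"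
    using dependent_finite[of "x ` {..<p}"] by auto
  have "(\<Sum>k<p. c (x k) *\<^sub>R x k) = 0"
    using c(2) sum.reindex[OF full_col_rank_inj_on[OF assms], of "\<lambda>v. c v *\<^sub>R v"] by simp
  then have "\<forall>k<p. c (x k) = 0"
    using assms unfolding full_col_rank_def by (auto dest: spec[of _ "\<lambda>k. c (x k)"])
  then show False using c(1) by auto
qed

lemma full_col_rank_notin_span_others:
  assumes "full_col_rank x p" and "j < p"
  shows "x j \<notin> span (x ` ({..<p} - {j}))"
proof -
  have "x ` {..<p} - {x j} = x ` ({..<p} - {j})"
    using full_col_rank_inj_on[OF assms(1)] assms(2) by (auto simp: inj_on_def)
  then show ?thesis
    using full_col_rank_independent[OF assms(1)] assms(2) unfolding dependent_def
    by (metis imageI lessThan_iff)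
qed

lemma UUt_in_span: "UUt u m y \<in> span (u ` {..<m})"
  unfolding UUt_def by (intro span_sum span_scale span_base) auto

lemma inner_UUt_residual:
  assumes "\<forall>l<m. \<forall>l'<m. u l \<bullet> u l' = (if l = l' then 1 else 0)" and "l < m"
  shows "u l \<bullet> (y - UUt u m y) = 0"
proof -
  have "u l \<bullet> UUt u m y = (\<Sum>l'<m. (u l' \<bullet> y) * (u l \<bullet> u l'))"
    by (simp add: UUt_def inner_sum_right)
  also have "\<dots> = (\<Sum>l'<m. if l' = l then u l \<bullet> y else 0)"
    by (rule sum.cong) (use assms in \<open>auto simp: inner_commute\<close>)
  also have "\<dots> = u l \<bullet> y" using assms(2) by simp
  finally show ?thesis by (simp add: inner_diff_right)
qed

lemma span_thin_svd_del:
  assumes rank: "full_col_rank x p" and j: "j < p" and svd: "thin_svd_del x p j u d v"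
  shows "span (u ` {..<p-1}) = span (x ` ({..<p} - {j}))"
proof -
  have columns_in_span: "x ` ({..<p} - {j}) \<subseteq> span (u ` {..<p-1})"
  proof
    fix y assume "y \<in> x ` ({..<p} - {j})"
    then obtain k where k: "k < p" "k \<noteq> j" "y = x k" by auto
    define m where "m = (if k < j then k else k - 1)"
    have m: "m < p - 1" "del_idx j m = k" using k j by (auto simp: m_def del_idx_def)
    have "x k = (\<Sum>l<p-1. (d l * v m l) *\<^sub>R u l)"
      using svd m unfolding thin_svd_del_def by metis
    also have "\<dots> \<in> span (u ` {..<p-1})" by (intro span_sum span_scale span_base) auto
    finally show "y \<in> span (u ` {..<p-1})" using k by simp
  qed
  have "independent (x ` ({..<p} - {j}))"
    using full_col_rank_independent[OF rank] by (rule independent_mono) auto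
  moreover have "card (x ` ({..<p} - {j})) = p - 1"
    using full_col_rank_inj_on[OF rank] j by (subst card_image) (auto intro: inj_on_subset)
  ultimately have dim_columns: "dim (span (x ` ({..<p} - {j}))) = p - 1"
    by (simp add: dim_eq_card_independent)
  have "dim (span (u ` {..<p-1})) \<le> card (u ` {..<p-1})"
    by (rule dim_le_card) auto
  also have "\<dots> \<le> p - 1" using card_image_le[of "{..<p-1}" u] by simp
  finally show ?thesis
    using columns_in_span dim_columns span_minimal[OF columns_in_span]
    by (intro subspace_dim_equal[symmetric]) auto
qed

theorem proposition2p2:
  fixes x :: "nat \<Rightarrow> real ^ 'n" and p j :: nat
    and u :: "nat \<Rightarrow> real ^ 'n" and d :: "nat \<Rightarrow> real" and v :: "nat \<Rightarrow> nat \<Rightarrow> real"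
    and s :: real and xt :: "real ^ 'n"
  assumes rank: "full_col_rank x p"
    and unit: "\<forall>k<p. norm (x k) = 1"
    and j: "j < p"
    and svd: "thin_svd_del x p j u d v"
  defines "\<sigma>2 \<equiv> (norm (x j - UUt u (p-1) (x j)))\<^sup>2"
  shows "((\<forall>k<p. k \<noteq> j \<longrightarrow> x k \<bullet> xt = x k \<bullet> x j) \<and> x j \<bullet> xt = 1 - s \<and> xt \<bullet> xt = 1)
     \<longleftrightarrow> (0 \<le> s \<and> s \<le> 2 * \<sigma>2 \<and>
          (\<exists>r :: real ^ 'n. xt = (s / \<sigma>2) *\<^sub>R UUt u (p-1) (x j) + (1 - s / \<sigma>2) *\<^sub>R x j + r
             \<and> (\<forall>k<p. x k \<bullet> r = 0) \<and> norm r = sqrt (2 * s - s\<^sup>2 / \<sigma>2)))"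
proof -
  define B where "B = x ` ({..<p} - {j})"
  define P where "P = UUt u (p-1) (x j)"
  have orthonormal: "\<forall>l<p-1. \<forall>l'<p-1. u l \<bullet> u l' = (if l = l' then 1 else 0)"
    using svd unfolding thin_svd_del_def by blast
  have span_u: "span (u ` {..<p-1}) = span B"
    using span_thin_svd_del[OF rank j svd] by (simp add: B_def)
  have "P \<in> span B" using UUt_in_span span_u by (metis P_def)
  moreover have "\<forall>b\<in>B. b \<bullet> (x j - P) = 0"
    using inner_span_orthogonal[of "u ` {..<p-1}"] inner_UUt_residual[OF orthonormal] span_u
    by (simp add: P_def span_base)
  moreover have "x j \<notin> span B" using full_col_rank_notin_span_others[OF rank j] by (simp add: B_def)
  ultimately have core: "((\<forall>b\<in>B. b \<bullet> xt = b \<bullet> x j) \<and> x j \<bullet> xt = 1 - s \<and> xt \<bullet> xt = 1) \<longleftrightarrow>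
    (0 \<le> s \<and> s \<le> 2 * \<sigma>2 \<and>
      (\<exists>r. xt = (s / \<sigma>2) *\<^sub>R P + (1 - s / \<sigma>2) *\<^sub>R x j + r
        \<and> (\<forall>b\<in>insert (x j) B. b \<bullet> r = 0) \<and> norm r = sqrt (2 * s - s\<^sup>2 / \<sigma>2)))"
    using unit_vector_constraints_iff[of "x j" P B] unit j by (simp add: \<sigma>2_def P_def)
  have other_columns: "(\<forall>k<p. k \<noteq> j \<longrightarrow> x k \<bullet> xt = x k \<bullet> x j) \<longleftrightarrow> (\<forall>b\<in>B. b \<bullet> xt = b \<bullet> x j)"
    by (auto simp: B_def)
  have all_columns: "(\<forall>k<p. x k \<bullet> r = 0) \<longleftrightarrow> (\<forall>b\<in>insert (x j) B. b \<bullet> r = 0)" for r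
    using j by (auto simp: B_def)
  show ?thesis unfolding other_columns all_columns P_def[symmetric] using core .
qed

end
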